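(* Let $n,m,N$ be positive integers, let $A_0,\ldots,A_m\in\mathbb{R}^{n\times n}$, let $\tau_0=0$ and $\tau_1,\ldots,\tau_m>0$, and put $\tau_{\max}=\max_i\tau_i$. Let $\theta_{N,-N},\ldots,\theta_{N,0}$ be $N+1$ distinct points of $[-\tau_{\max},0]$ with $\theta_{N,0}=0$, let $l_{N,k}$ ($k=-N,\ldots,0$) be the corresponding Lagrange polynomials of degree $N$ ($l_{N,k}(\theta_{N,i})=1$ if $i=k$ and $0$ otherwise), and let $d_{i,k}=l_{N,k}'(\theta_{N,i})$. Define the $(N+1)n\times(N+1)n$ block matrix ${\bf A_N}$ whose block rows indexed by $i=-N,\ldots,-1$ are $[d_{i,-N}I_n\ \cdots\ d_{i,-1}I_n\ \ d_{i,0}I_n]$ and whose last block row is $[\Gamma_{-N}\ \cdots\ \Gamma_{-1}\ \Gamma_0]$, where $\Gamma_0=A_0+\sum_{l=1}^m A_l\,l_{N,0}(-\tau_l)$ and $\Gamma_k=\sum_{l=1}^m A_l\,l_{N,k}(-\tau_l)$ for $k=-N,\ldots,-1$; and let ${\bf B_N}=[0_n\ \cdots\ 0_n\ I_n]^*\in\mathbb{R}^{(N+1)n\times n}$. For $\lambda\in\mathbb{C}$ let $p_N(\cdot;\lambda)$ be the polynomial of degree (at most) $N$ with $p_N(0;\lambda)=1$ and $p_N'(\theta_{N,i};\lambda)=\lambda\,p_N(\theta_{N,i};\lambda)$ for $i=-N,\ldots,-1$. Then, as matrix-valued functions of $\lambda$ (at every $\lambda$ where both sides are defined), $$ {\bf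 B_N}^*(\lambda I_{(N+1)n}-{\bf A_N})^{-1}{\bf B_N}=\Big(\lambda I_n-A_0-\sum_{i=1}^m A_i\,p_N(-\tau_i;\lambda)\Big)^{-1}. $$
   Context: ${\bf A_N},{\bf B_N}$ describe a spectral (collocation) discretization of the delay system $\dot x(t)=\sum_{i=0}^m A_ix(t-\tau_i)+u(t)$, $y=x$. The superscript $*$ denotes conjugate transpose. *)

theory Defs
  imports "Jordan_Normal_Form.Matrix" "HOL-Computational_Algebra.Polynomial"
begin

definition lagrange :: "(int \<Rightarrow> real) \<Rightarrow> nat \<Rightarrow> int \<Rightarrow> real poly" where
  "lagrange \<theta> N k =
     (\<Prod>j\<in>{-int N..0} - {k}. smult (1 / (\<theta> k - \<theta> j)) [:- \<theta> j, 1:])"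

definition dcoef :: "(int \<Rightarrow> real) \<Rightarrow> nat \<Rightarrow> int \<Rightarrow> int \<Rightarrow> real" where
  "dcoef \<theta> N i k = poly (pderiv (lagrange \<theta> N k)) (\<theta> i)"

definition Gamma :: "nat \<Rightarrow> nat \<Rightarrow> (nat \<Rightarrow> real mat) \<Rightarrow> (nat \<Rightarrow> real)
     \<Rightarrow> (int \<Rightarrow> real) \<Rightarrow> nat \<Rightarrow> int \<Rightarrow> real mat" where
  "Gamma n m A \<tau> \<theta> N k = mat n n (\<lambda>(s,t).
      (if k = 0 then A 0 $$ (s,t) else 0)
      + (\<Sum>l\<in>{1..m}. poly (lagrange \<theta> N k) (- \<tau> l) * A l $$ (s,t)))"

(* A_N: block (r,c), r,c in {0..N}, corresponds to paper's block (r-N, c-N) *)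
definition AN :: "nat \<Rightarrow> nat \<Rightarrow> (nat \<Rightarrow> real mat) \<Rightarrow> (nat \<Rightarrow> real)
     \<Rightarrow> (int \<Rightarrow> real) \<Rightarrow> nat \<Rightarrow> real mat" where
  "AN n m A \<tau> \<theta> N = mat ((N+1)*n) ((N+1)*n) (\<lambda>(a,b).
      let r = a div n; s = a mod n; c = b div n; t = b mod n;
          i = int r - int N; k = int c - int N
      in if r < N then (if s = t then dcoef \<theta> N i k else 0)
         else Gamma n m A \<tau> \<theta> N k $$ (s,t))"

definition BN :: "nat \<Rightarrow> nat \<Rightarrow> real mat" where
  "BN n N = mat ((N+1)*n) n (\<lambda>(a,b). if a div n = N \<and> a mod n = b then 1 else 0)"

definition pN_cond :: "(int \<Rightarrow> real) \<Rightarrow> nat \<Rightarrow> complex \<Rightarrow> complex poly \<Rightarrow> bool" where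
  "pN_cond \<theta> N lam p \<longleftrightarrow> degree p \<le> N \<and> poly p 0 = 1 \<and>
     (\<forall>i\<in>{-int N..-1}. poly (pderiv p) (complex_of_real (\<theta> i))
                         = lam * poly p (complex_of_real (\<theta> i)))"

definition pN :: "(int \<Rightarrow> real) \<Rightarrow> nat \<Rightarrow> complex \<Rightarrow> complex poly" where
  "pN \<theta> N lam = (THE p. pN_cond \<theta> N lam p)"

definition cmat :: "real mat \<Rightarrow> complex mat" where
  "cmat M = map_mat complex_of_real M"

definition charM :: "nat \<Rightarrow> nat \<Rightarrow> (nat \<Rightarrow> real mat) \<Rightarrow> (nat \<Rightarrow> real)
     \<Rightarrow> (int \<Rightarrow> real) \<Rightarrow> nat \<Rightarrow> complex \<Rightarrow> complex mat" where
  "charM n m A \<tau> \<theta> N lam = mat n n (\<lambda>(s,t).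
      (if s = t then lam else 0) - complex_of_real (A 0 $$ (s,t))
      - (\<Sum>i\<in>{1..m}. complex_of_real (A i $$ (s,t)) * poly (pN \<theta> N lam) (- complex_of_real (\<tau> i))))"

definition is_inverse :: "complex mat \<Rightarrow> complex mat \<Rightarrow> bool" where
  "is_inverse R X \<longleftrightarrow> X * R = 1\<^sub>m (dim_row X) \<and> R * X = 1\<^sub>m (dim_row X)"

end

theory Submission
  imports Defs
begin

(* Let p = p_N(.; lam) and let X be the block column whose k-th block is p(theta_k) R2, where R2 is
   the inverse of lam I - A_0 - sum_i A_i p(-tau_i). As deg p <= N, p is its own Lagrange
   interpolant on the nodes, so the first N block rows of A_N X are p'(theta_i) R2 = lam p(theta_i) R2
   and, since p(0) = 1, the last one is (A_0 + sum_i A_i p(-tau_i)) R2. Hence (lam I - A_N) X = B_N,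
   so R1 B_N = X and B_N^* R1 B_N, the last block of X, is R2. *)

lemma poly_map_poly_of_real [simp]:
  "poly (map_poly of_real p) (of_real x) = (of_real (poly p x) :: 'a :: {real_algebra_1, comm_ring})"
  by (induction p) (auto simp: map_poly_pCons)

lemma pderiv_map_poly_of_real:
  "pderiv (map_poly of_real p) = (map_poly of_real (pderiv p) :: 'a :: {real_algebra_1, idom} poly)"
  by (rule poly_eqI) (simp add: coeff_pderiv coeff_map_poly)

lemma pderiv_sum: "pderiv (sum f S) = (\<Sum>x\<in>S. pderiv (f x))"
  using higher_pderiv_sum[of 1 f S] by simp

lemma degree_lagrange_le:
  assumes "k \<in> {-int N..0}"
  shows "degree (lagrange \<theta> N k) \<le> N"
proof -
  have "degree (lagrange \<theta> N k) \<le> (\<Sum>j\<in>{-int N..0} - {k}. 1)"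
    unfolding lagrange_def by (rule order.trans[OF degree_prod_sum_le], simp, rule sum_mono, simp)
  with assms show ?thesis by simp
qed

lemma poly_lagrange_node:
  assumes inj: "inj_on \<theta> {-int N..0}" and "j \<in> {-int N..0}" "k \<in> {-int N..0}"
  shows "poly (lagrange \<theta> N k) (\<theta> j) = (if j = k then 1 else 0)"
proof (cases "j = k")
  case True
  have "poly (lagrange \<theta> N k) (\<theta> k) = (\<Prod>i\<in>{-int N..0} - {k}. 1)"
    unfolding lagrange_def poly_prod
  proof (intro prod.cong refl)
    fix i assume "i \<in> {-int N..0} - {k}"
    then have "\<theta> k \<noteq> \<theta> i"
      using assms inj_onD[OF inj, of k i] by auto
    then show "poly (smult (1 / (\<theta> k - \<theta> i)) [:- \<theta> i, 1:]) (\<theta> k) = 1"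
      by (simp add: diff_divide_distrib[symmetric])
  qed
  with True show ?thesis by simp
next
  case False
  then have "poly (lagrange \<theta> N k) (\<theta> j) = 0"
    unfolding lagrange_def poly_prod using assms by (intro prod_zero bexI[of _ j]) auto
  with False show ?thesis by simp
qed

lemma lagrange_interpolation:
  fixes p :: "complex poly"
  assumes inj: "inj_on \<theta> {-int N..0}" and deg: "degree p \<le> N"
  shows "p = (\<Sum>k\<in>{-int N..0}. smult (poly p (\<theta> k)) (map_poly of_real (lagrange \<theta> N k)))"
    (is "p = ?q")
proof (rule poly_eqI_degree)
  let ?nodes = "(\<lambda>k. complex_of_real (\<theta> k)) ` {-int N..0}"
  have "inj_on (\<lambda>k. complex_of_real (\<theta> k)) {-int N..0}"
    using inj by (auto simp: inj_on_def)
  then have card_nodes: "card ?nodes = N + 1"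
    by (simp add: card_image)
  show "poly p x = poly ?q x" if "x \<in> ?nodes" for x
  proof -
    from that obtain j where j: "j \<in> {-int N..0}" "x = of_real (\<theta> j)" by auto
    have "poly ?q x = (\<Sum>k\<in>{-int N..0}. poly p (\<theta> k) * (if j = k then 1 else 0))"
      unfolding poly_sum j(2) by (intro sum.cong refl) (simp add: poly_lagrange_node[OF inj j(1)])
    also have "\<dots> = poly p x"
      using j by (simp add: if_distrib cong: if_cong)
    finally show ?thesis by simp
  qed
  show "degree p < card ?nodes"
    using deg card_nodes by simp
  have "degree ?q \<le> N"
    by (intro degree_sum_le)
      (auto simp: degree_map_poly intro: order.trans[OF degree_smult_le] degree_lagrange_le)
  then show "degree ?q < card ?nodes"
    using card_nodes by simp
qed

lemma poly_eq_sum_lagrange: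
  fixes p :: "complex poly"
  assumes "inj_on \<theta> {-int N..0}" "degree p \<le> N"
  shows "poly p (of_real x) = (\<Sum>k\<in>{-int N..0}. poly p (\<theta> k) * of_real (poly (lagrange \<theta> N k) x))"
  by (subst lagrange_interpolation[OF assms]) (simp add: poly_sum)

lemma poly_pderiv_eq_sum_dcoef:
  fixes p :: "complex poly"
  assumes "inj_on \<theta> {-int N..0}" "degree p \<le> N"
  shows "poly (pderiv p) (of_real (\<theta> i)) = (\<Sum>k\<in>{-int N..0}. poly p (\<theta> k) * of_real (dcoef \<theta> N i k))"
  by (subst lagrange_interpolation[OF assms])
    (simp add: pderiv_sum poly_sum pderiv_smult pderiv_map_poly_of_real dcoef_def)

lemma sum_lessThan_mult_blocks:
  fixes K n :: nat
  shows "(\<Sum>a<K * n. f a) = (\<Sum>c<K. \<Sum>t<n. f (c * n + t))"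
proof -
  have "sum f {c * n..<c * n + n} = (\<Sum>t<n. f (c * n + t))" for c
    by (rule sum.reindex_bij_witness[where i = "\<lambda>t. c * n + t" and j = "\<lambda>a. a - c * n"]) auto
  then show ?thesis
    by (simp add: sum.nat_group[symmetric])
qed

lemma block_index_less: "r < K \<Longrightarrow> s < n \<Longrightarrow> r * n + s < K * (n :: nat)"
  using mult_le_mono1[of "Suc r" K n] by simp

lemma sum_nodes_as_nat: "(\<Sum>c<N + 1. g (int c - int N)) = (\<Sum>k\<in>{-int N..0}. g k)"
  by (rule sum.reindex_bij_witness[where i = "\<lambda>k. nat (k + int N)" and j = "\<lambda>c. int c - int N"]) auto

lemma smult_one_minus_mult_mat:
  fixes M :: "'a :: comm_ring_1 mat"
  assumes M: "M \<in> carrier_mat K K" and X: "X \<in> carrier_mat K k"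
  shows "(c \<cdot>\<^sub>m 1\<^sub>m K - M) * X = c \<cdot>\<^sub>m X - M * X"
proof -
  have "c \<cdot>\<^sub>m 1\<^sub>m K * X = c \<cdot>\<^sub>m X"
    using X by (subst mult_smult_assoc_mat[OF one_carrier_mat X]) simp
  then show ?thesis
    by (simp only: minus_mult_distrib_mat[OF smult_carrier_mat[OF one_carrier_mat] M X])
qed

(* For dim_row R = n, the Kronecker product of the column vector (v 0, ..., v (K - 1)) with R. *)
definition block_column :: "nat \<Rightarrow> nat \<Rightarrow> (nat \<Rightarrow> 'a :: times) \<Rightarrow> 'a mat \<Rightarrow> 'a mat" where
  "block_column K n v R = mat (K * n) (dim_col R) (\<lambda>(a, b). v (a div n) * R $$ (a mod n, b))"

lemma block_column_carrier: "block_column K n v R \<in> carrier_mat (K * n) (dim_col R)"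
  by (simp add: block_column_def)

lemma index_block_column:
  "r < K \<Longrightarrow> s < n \<Longrightarrow> b < dim_col R \<Longrightarrow>
    block_column K n v R $$ (r * n + s, b) = v r * R $$ (s, b)"
  by (simp add: block_column_def block_index_less)

lemma index_mult_block_column:
  fixes M :: "'a :: semiring_0 mat"
  assumes "dim_col M = K * n" "a < dim_row M" "b < dim_col R"
  shows "(M * block_column K n v R) $$ (a, b) = (\<Sum>c<K. \<Sum>t<n. M $$ (a, c * n + t) * (v c * R $$ (t, b)))"
proof -
  have "(M * block_column K n v R) $$ (a, b) = (\<Sum>j<K * n. M $$ (a, j) * block_column K n v R $$ (j, b))"
    using assms by (simp add: block_column_def scalar_prod_def atLeast0LessThan)
  also have "\<dots> = (\<Sum>c<K. \<Sum>t<n. M $$ (a, c * n + t) * (v c * R $$ (t, b)))"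
    unfolding sum_lessThan_mult_blocks using assms by (intro sum.cong refl) (simp add: index_block_column)
  finally show ?thesis .
qed

lemma BN_transpose_mult_block_column:
  assumes "R \<in> carrier_mat n k"
  shows "transpose_mat (cmat (BN n N)) * block_column (N + 1) n v R = v N \<cdot>\<^sub>m R"
proof (rule eq_matI)
  fix s b assume "s < dim_row (v N \<cdot>\<^sub>m R)" "b < dim_col (v N \<cdot>\<^sub>m R)"
  then have sb: "s < n" "b < k" using assms by auto
  have BN_entry: "transpose_mat (cmat (BN n N)) $$ (s, c * n + t) = (if c = N \<and> t = s then 1 else 0)"
    if "c < N + 1" "t < n" for c t
    using that sb block_index_less[OF that] by (simp add: cmat_def BN_def)
  have "transpose_mat (cmat (BN n N)) \<in> carrier_mat n ((N + 1) * n)"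
    by (simp add: cmat_def BN_def)
  then have "(transpose_mat (cmat (BN n N)) * block_column (N + 1) n v R) $$ (s, b)
      = (\<Sum>c<N + 1. \<Sum>t<n. (if c = N \<and> t = s then 1 else 0) * (v c * R $$ (t, b)))"
    using assms sb
    by (subst index_mult_block_column) (auto simp: BN_entry intro!: sum.cong simp del: sum.lessThan_Suc)
  also have "\<dots> = (v N \<cdot>\<^sub>m R) $$ (s, b)"
    using assms sb by (simp add: if_distrib[of "\<lambda>x. x * _"] sum.delta' cong: if_cong)
  finally show "(transpose_mat (cmat (BN n N)) * block_column (N + 1) n v R) $$ (s, b) = (v N \<cdot>\<^sub>m R) $$ (s, b)" .
qed (use assms in \<open>auto simp: cmat_def BN_def block_column_def\<close>)

lemma dim_cmat_AN [simp]:
  "dim_row (cmat (AN n m A \<tau> \<theta> N)) = (N + 1) * n"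
  "dim_col (cmat (AN n m A \<tau> \<theta> N)) = (N + 1) * n"
  by (simp_all add: cmat_def AN_def)

lemma index_cmat_AN_block:
  assumes "r < N + 1" "c < N + 1" "s < n" "t < n"
  shows "cmat (AN n m A \<tau> \<theta> N) $$ (r * n + s, c * n + t) = of_real
    (if r < N then (if s = t then dcoef \<theta> N (int r - int N) (int c - int N) else 0)
     else Gamma n m A \<tau> \<theta> N (int c - int N) $$ (s, t))"
  using assms block_index_less[OF assms(1,3)] block_index_less[OF assms(2,4)]
  by (simp add: cmat_def AN_def Let_def)

definition node_values :: "(int \<Rightarrow> real) \<Rightarrow> nat \<Rightarrow> complex poly \<Rightarrow> nat \<Rightarrow> complex" where
  "node_values \<theta> N p c = poly p (of_real (\<theta> (int c - int N)))"

lemma AN_mult_node_values_derivative_row: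
  fixes p :: "complex poly"
  assumes inj: "inj_on \<theta> {-int N..0}" and deg: "degree p \<le> N"
    and "r < N" "s < n" "b < dim_col R"
  shows "(cmat (AN n m A \<tau> \<theta> N) * block_column (N + 1) n (node_values \<theta> N p) R) $$ (r * n + s, b)
    = poly (pderiv p) (of_real (\<theta> (int r - int N))) * R $$ (s, b)"
proof -
  let ?i = "int r - int N"
  have "(cmat (AN n m A \<tau> \<theta> N) * block_column (N + 1) n (node_values \<theta> N p) R) $$ (r * n + s, b)
      = (\<Sum>c<N + 1. \<Sum>t<n. cmat (AN n m A \<tau> \<theta> N) $$ (r * n + s, c * n + t)
          * (node_values \<theta> N p c * R $$ (t, b)))"
    using assms block_index_less[of r "N + 1" s n] by (intro index_mult_block_column) auto
  also have "\<dots> = (\<Sum>c<N + 1. node_values \<theta> N p c * of_real (dcoef \<theta> N ?i (int c - int N))) * R $$ (s, b)"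
    unfolding sum_distrib_right using assms
    by (intro sum.cong refl)
      (simp add: index_cmat_AN_block if_distrib[of complex_of_real] if_distrib[of "\<lambda>x. x * _"]
        sum.delta cong: if_cong)
  also have "\<dots> = poly (pderiv p) (of_real (\<theta> ?i)) * R $$ (s, b)"
    using sum_nodes_as_nat[of "\<lambda>k. poly p (\<theta> k) * of_real (dcoef \<theta> N ?i k)"]
    by (simp add: poly_pderiv_eq_sum_dcoef[OF inj deg] node_values_def)
  finally show ?thesis .
qed

lemma sum_node_values_Gamma:
  fixes p :: "complex poly"
  assumes inj: "inj_on \<theta> {-int N..0}" and deg: "degree p \<le> N" and "s < n" "t < n"
  shows "(\<Sum>k\<in>{-int N..0}. poly p (\<theta> k) * of_real (Gamma n m A \<tau> \<theta> N k $$ (s, t)))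
    = of_real (A 0 $$ (s, t)) * poly p (\<theta> 0)
      + (\<Sum>l\<in>{1..m}. of_real (A l $$ (s, t)) * poly p (- of_real (\<tau> l)))"
proof -
  have "(\<Sum>k\<in>{-int N..0}. poly p (\<theta> k) * of_real (Gamma n m A \<tau> \<theta> N k $$ (s, t)))
      = (\<Sum>k\<in>{-int N..0}. if k = 0 then of_real (A 0 $$ (s, t)) * poly p (\<theta> k) else 0)
        + (\<Sum>k\<in>{-int N..0}. \<Sum>l\<in>{1..m}. of_real (A l $$ (s, t))
             * (poly p (\<theta> k) * of_real (poly (lagrange \<theta> N k) (- \<tau> l))))"
  proof -
    have "poly p (\<theta> k) * of_real (Gamma n m A \<tau> \<theta> N k $$ (s, t))
        = (if k = 0 then of_real (A 0 $$ (s, t)) * poly p (\<theta> k) else 0)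
          + (\<Sum>l\<in>{1..m}. of_real (A l $$ (s, t))
              * (poly p (\<theta> k) * of_real (poly (lagrange \<theta> N k) (- \<tau> l))))"
      for k
      using assms by (cases "k = 0") (simp_all add: Gamma_def distrib_left sum_distrib_left mult_ac)
    then show ?thesis by (simp add: sum.distrib)
  qed
  also have "\<dots> = (\<Sum>k\<in>{-int N..0}. if k = 0 then of_real (A 0 $$ (s, t)) * poly p (\<theta> k) else 0)
        + (\<Sum>l\<in>{1..m}. of_real (A l $$ (s, t))
             * (\<Sum>k\<in>{-int N..0}. poly p (\<theta> k) * of_real (poly (lagrange \<theta> N k) (- \<tau> l))))"
    by (subst sum.swap) (simp add: sum_distrib_left)
  also have "\<dots> = of_real (A 0 $$ (s, t)) * poly p (\<theta> 0)
      + (\<Sum>l\<in>{1..m}. of_real (A l $$ (s, t)) * poly p (- of_real (\<tau> l)))"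
    using poly_eq_sum_lagrange[OF inj deg, of "- \<tau> _"] by simp
  finally show ?thesis .
qed

lemma AN_mult_node_values_last_row:
  fixes p :: "complex poly"
  assumes inj: "inj_on \<theta> {-int N..0}" and deg: "degree p \<le> N" and "s < n" "b < dim_col R"
  shows "(cmat (AN n m A \<tau> \<theta> N) * block_column (N + 1) n (node_values \<theta> N p) R) $$ (N * n + s, b)
    = (\<Sum>t<n. (of_real (A 0 $$ (s, t)) * poly p (\<theta> 0)
        + (\<Sum>l\<in>{1..m}. of_real (A l $$ (s, t)) * poly p (- of_real (\<tau> l)))) * R $$ (t, b))"
proof -
  let ?G = "\<lambda>c t. complex_of_real (Gamma n m A \<tau> \<theta> N (int c - int N) $$ (s, t))"
  have "(cmat (AN n m A \<tau> \<theta> N) * block_column (N + 1) n (node_values \<theta> N p) R) $$ (N * n + s, b)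
      = (\<Sum>c<N + 1. \<Sum>t<n. ?G c t * (node_values \<theta> N p c * R $$ (t, b)))"
    using assms block_index_less[of N "N + 1" s n]
    by (subst index_mult_block_column) (auto simp: index_cmat_AN_block intro!: sum.cong simp del: sum.lessThan_Suc)
  also have "\<dots> = (\<Sum>t<n. (\<Sum>c<N + 1. node_values \<theta> N p c * ?G c t) * R $$ (t, b))"
    by (subst sum.swap) (simp add: sum_distrib_left sum_distrib_right mult_ac del: sum.lessThan_Suc)
  also have "\<dots> = (\<Sum>t<n. (of_real (A 0 $$ (s, t)) * poly p (\<theta> 0)
        + (\<Sum>l\<in>{1..m}. of_real (A l $$ (s, t)) * poly p (- of_real (\<tau> l)))) * R $$ (t, b))"
  proof (intro sum.cong refl)
    fix t assume "t \<in> {..<n}"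
    then have "t < n" by simp
    then show "(\<Sum>c<N + 1. node_values \<theta> N p c * ?G c t) * R $$ (t, b)
      = (of_real (A 0 $$ (s, t)) * poly p (\<theta> 0)
          + (\<Sum>l\<in>{1..m}. of_real (A l $$ (s, t)) * poly p (- of_real (\<tau> l)))) * R $$ (t, b)"
      using sum_nodes_as_nat[of "\<lambda>k. poly p (\<theta> k) * of_real (Gamma n m A \<tau> \<theta> N k $$ (s, t))"]
      by (simp add: node_values_def sum_node_values_Gamma[OF inj deg \<open>s < n\<close> \<open>t < n\<close>])
  qed
  finally show ?thesis .
qed

lemma index_charM_mult:
  assumes "R \<in> carrier_mat n k" "s < n" "b < k"
  shows "(charM n m A \<tau> \<theta> N lam * R) $$ (s, b) = lam * R $$ (s, b)
    - (\<Sum>t<n. (of_real (A 0 $$ (s, t))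
        + (\<Sum>l\<in>{1..m}. of_real (A l $$ (s, t)) * poly (pN \<theta> N lam) (- of_real (\<tau> l)))) * R $$ (t, b))"
proof -
  have "(charM n m A \<tau> \<theta> N lam * R) $$ (s, b)
      = (\<Sum>t<n. ((if s = t then lam else 0) - (of_real (A 0 $$ (s, t))
          + (\<Sum>l\<in>{1..m}. of_real (A l $$ (s, t)) * poly (pN \<theta> N lam) (- of_real (\<tau> l))))) * R $$ (t, b))"
    using assms by (auto simp: charM_def scalar_prod_def atLeast0LessThan intro!: sum.cong)
  also have "\<dots> = lam * R $$ (s, b) - (\<Sum>t<n. (of_real (A 0 $$ (s, t))
        + (\<Sum>l\<in>{1..m}. of_real (A l $$ (s, t)) * poly (pN \<theta> N lam) (- of_real (\<tau> l)))) * R $$ (t, b))"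
    using assms by (simp add: left_diff_distrib sum_subtractf if_distrib[of "\<lambda>x. x * _"] sum.delta cong: if_cong)
  finally show ?thesis .
qed

lemma resolvent_mult_node_values:
  assumes inj: "inj_on \<theta> {-int N..0}" and "\<theta> 0 = 0"
    and p: "pN_cond \<theta> N lam (pN \<theta> N lam)"
    and R: "R \<in> carrier_mat n n" and CR: "charM n m A \<tau> \<theta> N lam * R = 1\<^sub>m n"
  shows "(lam \<cdot>\<^sub>m 1\<^sub>m ((N + 1) * n) - cmat (AN n m A \<tau> \<theta> N))
      * block_column (N + 1) n (node_values \<theta> N (pN \<theta> N lam)) R = cmat (BN n N)"
proof -
  define p where "p = pN \<theta> N lam"
  define X where "X = block_column (N + 1) n (node_values \<theta> N p) R"
  have deg: "degree p \<le> N" and "poly p 0 = 1"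
    using p by (simp_all add: p_def pN_cond_def)
  then have p_at_0: "poly p (of_real (\<theta> 0)) = 1"
    using \<open>\<theta> 0 = 0\<close> by simp
  have X: "X \<in> carrier_mat ((N + 1) * n) n"
    using R block_column_carrier[of "N + 1" n "node_values \<theta> N p" R] by (simp add: X_def)
  have "(lam \<cdot>\<^sub>m 1\<^sub>m ((N + 1) * n) - cmat (AN n m A \<tau> \<theta> N)) * X
      = lam \<cdot>\<^sub>m X - cmat (AN n m A \<tau> \<theta> N) * X"
    using X by (intro smult_one_minus_mult_mat carrier_matI) simp_all
  also have "\<dots> = cmat (BN n N)"
  proof (rule eq_matI)
    fix a b assume "a < dim_row (cmat (BN n N))" "b < dim_col (cmat (BN n N))"
    then have ab: "a < (N + 1) * n" "b < n"
      by (simp_all add: cmat_def BN_def)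
    define r s where "r = a div n" and "s = a mod n"
    have a: "a = r * n + s" and r: "r < N + 1" and s: "s < n"
      using ab by (auto simp: r_def s_def less_mult_imp_div_less)
    have lam_X: "(lam \<cdot>\<^sub>m X) $$ (a, b) = lam * node_values \<theta> N p r * R $$ (s, b)"
      using X ab R r s by (simp add: a X_def index_block_column)
    have BN: "cmat (BN n N) $$ (a, b) = (if r = N \<and> s = b then 1 else 0)"
      using ab by (simp add: cmat_def BN_def r_def s_def)
    have minus: "(lam \<cdot>\<^sub>m X - cmat (AN n m A \<tau> \<theta> N) * X) $$ (a, b)
        = (lam \<cdot>\<^sub>m X) $$ (a, b) - (cmat (AN n m A \<tau> \<theta> N) * X) $$ (a, b)"
      using X ab by (intro index_minus_mat) auto
    show "(lam \<cdot>\<^sub>m X - cmat (AN n m A \<tau> \<theta> N) * X) $$ (a, b) = cmat (BN n N) $$ (a, b)"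
    proof (cases "r < N")
      case True
      have "(cmat (AN n m A \<tau> \<theta> N) * X) $$ (a, b) = poly (pderiv p) (of_real (\<theta> (int r - int N))) * R $$ (s, b)"
        unfolding a X_def using R ab by (intro AN_mult_node_values_derivative_row[OF inj deg True s]) simp
      also have "\<dots> = lam * node_values \<theta> N p r * R $$ (s, b)"
        using p True by (simp add: p_def pN_cond_def node_values_def)
      finally show ?thesis
        unfolding minus lam_X BN using True by simp
    next
      case False
      with r have "r = N" by simp
      have "(cmat (AN n m A \<tau> \<theta> N) * X) $$ (a, b)
          = (\<Sum>t<n. (of_real (A 0 $$ (s, t)) * poly p (\<theta> 0)
              + (\<Sum>l\<in>{1..m}. of_real (A l $$ (s, t)) * poly p (- of_real (\<tau> l)))) * R $$ (t, b))"
        unfolding a X_def \<open>r = N\<close> using R ab by (intro AN_mult_node_values_last_row[OF inj deg s]) simp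
      moreover have "(charM n m A \<tau> \<theta> N lam * R) $$ (s, b) = (if s = b then 1 else 0)"
        using CR s ab by simp
      ultimately show ?thesis
        unfolding minus lam_X BN index_charM_mult[OF R s \<open>b < n\<close>]
        using p_at_0 \<open>r = N\<close> by (simp add: node_values_def p_def)
    qed
  qed (use X in \<open>simp_all add: cmat_def BN_def AN_def\<close>)
  finally show ?thesis
    by (simp add: X_def p_def)
qed

theorem theorem1:
  fixes n m N :: nat
    and A :: "nat \<Rightarrow> real mat"
    and \<tau> :: "nat \<Rightarrow> real"
    and \<theta> :: "int \<Rightarrow> real"
    and lam :: complex
    and R1 R2 :: "complex mat"
  assumes "n > 0" "m > 0" "N > 0"
    and "\<forall>i\<in>{0..m}. A i \<in> carrier_mat n n"
    and "\<tau> 0 = 0" "\<forall>i\<in>{1..m}. \<tau> i > 0"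
    and "inj_on \<theta> {-int N..0}"
    and "\<forall>k\<in>{-int N..0}. - Max (\<tau> ` {0..m}) \<le> \<theta> k \<and> \<theta> k \<le> 0"
    and "\<theta> 0 = 0"
    and "\<exists>!p. pN_cond \<theta> N lam p"
    and "R1 \<in> carrier_mat ((N+1)*n) ((N+1)*n)"
    and "is_inverse R1 (lam \<cdot>\<^sub>m 1\<^sub>m ((N+1)*n) - cmat (AN n m A \<tau> \<theta> N))"
    and "R2 \<in> carrier_mat n n"
    and "is_inverse R2 (charM n m A \<tau> \<theta> N lam)"
  shows "transpose_mat (cmat (BN n N)) * R1 * cmat (BN n N) = R2"
proof -
  let ?K = "(N + 1) * n" and ?B = "cmat (BN n N)" and ?p = "pN \<theta> N lam"
  define X where "X = block_column (N + 1) n (node_values \<theta> N ?p) R2"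
  have p: "pN_cond \<theta> N lam ?p"
    using theI'[OF assms(10)] by (simp add: pN_def)
  have X: "X \<in> carrier_mat ?K n"
    using assms(13) block_column_carrier[of "N + 1" n _ R2] by (simp add: X_def)
  have B: "?B \<in> carrier_mat ?K n"
    by (simp add: cmat_def BN_def)
  have M_X: "(lam \<cdot>\<^sub>m 1\<^sub>m ?K - cmat (AN n m A \<tau> \<theta> N)) * X = ?B"
    unfolding X_def using assms(7,9,13,14) p
    by (intro resolvent_mult_node_values) (simp_all add: is_inverse_def charM_def)
  have R1_M: "R1 * (lam \<cdot>\<^sub>m 1\<^sub>m ?K - cmat (AN n m A \<tau> \<theta> N)) = 1\<^sub>m ?K"
    using assms(12) by (simp add: is_inverse_def cmat_def AN_def)
  have "R1 * ?B = X"
    using assms(11) X R1_M unfolding M_X[symmetric]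
    by (subst assoc_mult_mat[symmetric, of _ ?K ?K _ ?K _ n]) (auto intro: carrier_matI)
  then have "transpose_mat ?B * R1 * ?B = transpose_mat ?B * X"
    using assms(11) B by (subst assoc_mult_mat[of _ n ?K _ ?K _ n]) auto
  also have "\<dots> = node_values \<theta> N ?p N \<cdot>\<^sub>m R2"
    unfolding X_def using assms(13) by (rule BN_transpose_mult_block_column)
  also have "node_values \<theta> N ?p N = 1"
    using p assms(9) by (simp add: node_values_def pN_cond_def)
  finally show ?thesis
    by (auto intro!: eq_matI)
qed

end
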